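(* Let $\Omega\subset\mathbb{R}^N$ be open and bounded and let $p:\Omega\to(1,\infty)$ be Lipschitz continuous with $p^-:=\operatorname{ess\,inf}_\Omega p>1$. Let $q\ge2$ and let $u$ be a uniformly continuous viscosity supersolution to $-\Delta^N_{p(x)}u\ge0$ in $\Omega$. Then there is a function $E$ with $E(\varepsilon)\to0$ as $\varepsilon\to0$, depending only on $p$, $q$ and the modulus of continuity of $u$, such that for every $\varepsilon>0$: whenever $x\in\Omega_{r(\varepsilon)}$, $(\eta,X)\in J^{2,-}u_\varepsilon(x)$ and $\eta\ne0$, it holds $$|\eta|^{\min(p(x)-2,0)}F(x,\eta,X)\ge E(\varepsilon).$$
   Context: For $x\in\Omega$, $\eta\ne0$, $X$ symmetric $N\times N$: $F(x,\eta,X):=-\big(\operatorname{tr}X+\frac{p(x)-2}{|\eta|^2}\langle X\eta,\eta\rangle\big)$. The subjet $J^{2,-}v(x)$ is the set of $(\eta,X)$ with $v(y)\ge v(x)+\eta\cdot(y-x)+\frac12\langle X(y-x),y-x\rangle+o(|y-x|^2)$ as $y\to x$. A lower semicontinuous $u$ is a viscosity supersolution to $-\Delta^N_{p(x)}u\ge0$ if $F(x,\eta,X)\ge0$ whenever $x\in\Omega$, $(\eta,X)\in J^{2,-}u(x)$, $\eta\ne0$ (nothing required when $\eta=0$). Inf-convolution: for bounded $u\in C(\Omega)$, $q\ge2$, $\varepsilon>0$, $u_\varepsilon(x):=\inf_{y\in\Omega}\{u(y)+\frac{1}{q\varepsilon^{q-1}}|x-y|^q\}$. Set $r(\varepsilon):=(q\varepsilon^{q-1}\operatorname{osc}_\Omega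 u)^{1/q}$ and $\Omega_{r(\varepsilon)}:=\{x\in\Omega:\operatorname{dist}(x,\partial\Omega)>r(\varepsilon)\}$. *)

theory Defs
  imports "HOL-Analysis.Analysis"
begin

definition symmetric_mat :: "real^'n^'n \<Rightarrow> bool" where
  "symmetric_mat X \<longleftrightarrow> transpose X = X"

definition subjet2 :: "(real^'n) set \<Rightarrow> (real^'n \<Rightarrow> real) \<Rightarrow> real^'n
                        \<Rightarrow> ((real^'n) \<times> (real^'n^'n)) set" where
  "subjet2 S v x = {(\<eta>, X). symmetric_mat X \<and>
     (\<forall>e>0. \<exists>\<delta>>0. \<forall>y\<in>S. norm (y - x) < \<delta> \<longrightarrow>
        v y \<ge> v x + \<eta> \<bullet> (y - x) + (1/2) * ((X *v (y - x)) \<bullet> (y - x)) - e * (norm (y - x))\<^sup>2)}"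

definition Fop :: "(real^'n \<Rightarrow> real) \<Rightarrow> real^'n \<Rightarrow> real^'n \<Rightarrow> real^'n^'n \<Rightarrow> real" where
  "Fop p x \<eta> X = - (trace X + (p x - 2) / (norm \<eta>)\<^sup>2 * ((X *v \<eta>) \<bullet> \<eta>))"

definition lsc_on :: "(real^'n) set \<Rightarrow> (real^'n \<Rightarrow> real) \<Rightarrow> bool" where
  "lsc_on S u \<longleftrightarrow> (\<forall>x\<in>S. \<forall>e>0. \<exists>\<delta>>0. \<forall>y\<in>S. norm (y - x) < \<delta> \<longrightarrow> u y > u x - e)"

definition visc_supersol :: "(real^'n) set \<Rightarrow> (real^'n \<Rightarrow> real) \<Rightarrow> (real^'n \<Rightarrow> real) \<Rightarrow> bool" where
  "visc_supersol \<Omega> p u \<longleftrightarrow> lsc_on \<Omega> u \<and>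
     (\<forall>x\<in>\<Omega>. \<forall>\<eta> X. (\<eta>, X) \<in> subjet2 \<Omega> u x \<longrightarrow> \<eta> \<noteq> 0 \<longrightarrow> Fop p x \<eta> X \<ge> 0)"

definition infconv :: "(real^'n) set \<Rightarrow> (real^'n \<Rightarrow> real) \<Rightarrow> real \<Rightarrow> real \<Rightarrow> real^'n \<Rightarrow> real" where
  "infconv \<Omega> u q \<epsilon> x = (INF y\<in>\<Omega>. u y + (norm (x - y)) powr q / (q * \<epsilon> powr (q - 1)))"

definition osc :: "(real^'n) set \<Rightarrow> (real^'n \<Rightarrow> real) \<Rightarrow> real" where
  "osc \<Omega> u = (SUP x\<in>\<Omega>. u x) - (INF x\<in>\<Omega>. u x)"

definition rad :: "(real^'n) set \<Rightarrow> (real^'n \<Rightarrow> real) \<Rightarrow> real \<Rightarrow> real \<Rightarrow> real" where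
  "rad \<Omega> u q \<epsilon> = (q * \<epsilon> powr (q - 1) * osc \<Omega> u) powr (1 / q)"

definition inner_set :: "(real^'n) set \<Rightarrow> real \<Rightarrow> (real^'n) set" where
  "inner_set \<Omega> r = {x\<in>\<Omega>. infdist x (frontier \<Omega>) > r}"

end

theory Submission
  imports Defs
begin

text \<open>
  Let y be a point where the infimum defining u_\<epsilon>(x) is attained. Touching u_\<epsilon> from above at x by
  the translate of |. - y|^q forces \<eta> = (|x - y| / \<epsilon>)^(q-1) sgn(x - y). Moving the test point near y
  by the stretch h \<mapsto> h + (\<alpha> - 1)(e . h) e along e = sgn(x - y), with \<alpha> = sqrt((p(x) - 1) / (p(y) - 1)),
  turns a subjet of u_\<epsilon> at x into one of u at y, at the price of a second order term coming from the
  curvature of |.|^q. The supersolution inequality at y then bounds F(x, \<eta>, X) from below by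
  -(sqrt(p(x) - 1) - sqrt(p(y) - 1))^2 (q - 1) (2|x - y|)^(q-2) / \<epsilon>^(q-1), which by the Lipschitz
  continuity of p is -C |x - y| |\<eta>|. Finally, comparing u at y with u on the segment towards x, the
  modulus \<omega> controls both |x - y| and |x - y| |\<eta>| uniformly as \<epsilon> \<rightarrow> 0.
\<close>

section \<open>Real-variable estimates\<close>

lemma powr_taylor_upper:
  fixes \<rho> t q :: real
  assumes "\<rho> > 0" "q \<ge> 2" "\<bar>t\<bar> \<le> \<rho> / 2"
  shows "(\<rho> + t) powr q \<le> \<rho> powr q + q * \<rho> powr (q - 1) * t + q * (q - 1) / 2 * (2 * \<rho>) powr (q - 2) * t\<^sup>2"
proof (cases "t = 0")
  case True
  then show ?thesis by simp
next
  case False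
  define diff :: "nat \<Rightarrow> real \<Rightarrow> real" where
    "diff = (\<lambda>m s. if m = 0 then s powr q else if m = 1 then q * s powr (q - 1) else q * (q - 1) * s powr (q - 2))"
  have D: "\<forall>m s. m < 2 \<and> \<rho> / 2 \<le> s \<and> s \<le> 2 * \<rho> \<longrightarrow> DERIV (diff m) s :> diff (Suc m) s"
  proof (intro allI impI)
    fix m :: nat and s :: real
    assume h: "m < 2 \<and> \<rho> / 2 \<le> s \<and> s \<le> 2 * \<rho>"
    then have s: "s > 0" using assms by auto
    consider "m = 0" | "m = 1" using h by linarith
    then show "DERIV (diff m) s :> diff (Suc m) s"
    proof cases
      case 1
      then show ?thesis using has_real_derivative_powr[OF s, of q] by (simp add: diff_def)
    next
      case 2
      then show ?thesis using DERIV_cmult[OF has_real_derivative_powr[OF s, of "q - 1"], of q]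
        by (simp add: diff_def algebra_simps)
    qed
  qed
  have "\<rho> / 2 \<le> \<rho> + t" "\<rho> + t \<le> 2 * \<rho>" using assms by auto
  from Taylor[of 2 diff "\<lambda>s. s powr q" "\<rho> / 2" "2 * \<rho>" \<rho> "\<rho> + t", OF _ _ D _ _ this] assms False
  obtain \<xi> where \<xi>: "if \<rho> + t < \<rho> then \<rho> + t < \<xi> \<and> \<xi> < \<rho> else \<rho> < \<xi> \<and> \<xi> < \<rho> + t"
    and eq: "(\<rho> + t) powr q = (\<Sum>m<2. diff m \<rho> / fact m * (\<rho> + t - \<rho>) ^ m) + diff 2 \<xi> / fact 2 * (\<rho> + t - \<rho>)\<^sup>2"
    by (auto simp: diff_def)
  have "\<xi> powr (q - 2) \<le> (2 * \<rho>) powr (q - 2)"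
    using \<xi> assms by (intro powr_mono2) (auto split: if_splits)
  then have "q * (q - 1) * \<xi> powr (q - 2) * t\<^sup>2 \<le> q * (q - 1) * (2 * \<rho>) powr (q - 2) * t\<^sup>2"
    using assms by (intro mult_right_mono mult_left_mono) auto
  moreover have "(\<rho> + t) powr q = \<rho> powr q + q * \<rho> powr (q - 1) * t + q * (q - 1) * \<xi> powr (q - 2) * t\<^sup>2 / 2"
    using eq by (simp add: diff_def eval_nat_numeral)
  ultimately show ?thesis by simp
qed

lemma sqrt_diff_square_le:
  fixes r s m :: real
  assumes "r > 0" "s \<ge> m" "m > 0"
  shows "(sqrt r - sqrt s)\<^sup>2 \<le> (r - s)\<^sup>2 / m"
proof -
  have s: "s > 0" using assms by simp
  have "(sqrt r - sqrt s)\<^sup>2 * (sqrt r + sqrt s)\<^sup>2 = (r - s)\<^sup>2"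
    using assms s by (simp add: power_mult_distrib[symmetric] algebra_simps power2_eq_square)
  moreover have "m \<le> (sqrt r + sqrt s)\<^sup>2"
  proof -
    have "(sqrt s)\<^sup>2 \<le> (sqrt r + sqrt s)\<^sup>2" using assms s by (intro power_mono) auto
    then show ?thesis using s assms by simp
  qed
  ultimately have "(sqrt r - sqrt s)\<^sup>2 * m \<le> (r - s)\<^sup>2"
    by (metis mult_left_mono zero_le_power2)
  then show ?thesis using assms by (simp add: field_simps)
qed

lemma powr_le_one_plus:
  fixes n a :: real
  assumes "n > 0" "0 \<le> a" "a \<le> 1"
  shows "n powr a \<le> 1 + n"
proof (cases "n \<le> 1")
  case True
  then have "n powr a \<le> 1" using assms by (intro powr_le1) auto
  then show ?thesis using assms by simp
next
  case False
  then have "n powr a \<le> n powr 1" using assms by (intro powr_mono) auto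
  then show ?thesis using assms by simp
qed

lemma powr_weighted_lower_bound:
  fixes K \<rho> n m B F :: real
  assumes "K \<ge> 0" "\<rho> > 0" "n > 0" "- 1 \<le> m" "m \<le> 0" "\<rho> * (1 + n) \<le> B" "- K * (\<rho> * n) \<le> F"
  shows "- K * B \<le> n powr m * F"
proof -
  have "n powr (m + 1) \<le> 1 + n" using assms by (intro powr_le_one_plus) auto
  then have "\<rho> * (n powr m * n) \<le> B"
    using assms(2,3,6) by (simp add: powr_add) (smt (verit) mult_left_mono)
  then have "- K * B \<le> n powr m * (- K * (\<rho> * n))"
    using assms(1) by (simp add: mult_left_mono mult.left_commute)
  also have "\<dots> \<le> n powr m * F" using assms(7) by (intro mult_left_mono) auto
  finally show ?thesis .
qed

lemma nonpos_if_linear_le_quadratic: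
  fixes a C \<delta> :: real
  assumes "\<delta> > 0" "\<And>t. 0 < t \<Longrightarrow> t < \<delta> \<Longrightarrow> t * a \<le> C * t\<^sup>2"
  shows "a \<le> 0"
proof (rule ccontr)
  assume "\<not> a \<le> 0"
  define t where "t = min (\<delta> / 2) (a / (2 * (\<bar>C\<bar> + 1)))"
  have t: "0 < t" "t < \<delta>" using \<open>\<not> a \<le> 0\<close> assms(1) by (auto simp: t_def)
  have "t \<le> a / (2 * (\<bar>C\<bar> + 1))" by (simp add: t_def)
  then have Ct: "(\<bar>C\<bar> + 1) * t \<le> a / 2" by (simp add: field_simps)
  have "t * a \<le> C * t\<^sup>2" using assms(2)[OF t] .
  also have "\<dots> \<le> \<bar>C\<bar> * t * t"
    using abs_ge_self[of C] t by (simp add: power2_eq_square mult_right_mono)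
  also have "\<dots> < (\<bar>C\<bar> + 1) * t * t" using t by simp
  also have "\<dots> \<le> a / 2 * t" using Ct t by (intro mult_right_mono) auto
  finally show False using t \<open>\<not> a \<le> 0\<close> by (simp add: field_simps)
qed

lemma DERIV_eq_of_quadratic_lower_bound:
  fixes g :: "real \<Rightarrow> real"
  assumes D: "(g has_real_derivative D) (at 0)"
    and ev: "\<forall>\<^sub>F t in at 0. t * a - C * t\<^sup>2 \<le> g t - g 0"
  shows "a = D"
proof -
  have lim: "((\<lambda>t. (g t - g 0) / t) \<longlongrightarrow> D) (at 0)"
    using D by (simp add: has_field_derivative_iff)
  have quot: "((\<lambda>t. a - C * t) \<longlongrightarrow> a - C * 0) (at 0 within S)" for S
    by (intro tendsto_intros)
  have div: "(t * a - C * t\<^sup>2) / t = a - C * t" if "t \<noteq> 0" for t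
    using that by (simp add: field_simps power2_eq_square)
  have "a \<le> D"
  proof (rule tendsto_le[OF trivial_limit_at_right_real])
    show "((\<lambda>t. (g t - g 0) / t) \<longlongrightarrow> D) (at_right 0)"
      using lim by (rule tendsto_mono[OF at_le, rotated]) simp
    have "\<forall>\<^sub>F t in at_right 0. t * a - C * t\<^sup>2 \<le> g t - g 0"
      using ev by (rule filter_leD[OF at_le, rotated]) simp
    then show "\<forall>\<^sub>F t in at_right 0. a - C * t \<le> (g t - g 0) / t"
      using eventually_at_right_less[of 0]
    proof eventually_elim
      case (elim t)
      then show ?case using div[of t] divide_right_mono[OF elim(1), of t] by simp
    qed
  qed (use quot in simp)
  moreover have "D \<le> a"
  proof (rule tendsto_le[OF trivial_limit_at_left_real])
    show "((\<lambda>t. (g t - g 0) / t) \<longlongrightarrow> D) (at_left 0)"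
      using lim by (rule tendsto_mono[OF at_le, rotated]) simp
    have "\<forall>\<^sub>F t in at_left 0. t * a - C * t\<^sup>2 \<le> g t - g 0"
      using ev by (rule filter_leD[OF at_le, rotated]) simp
    moreover have "\<forall>\<^sub>F t in at_left (0::real). t < 0" by (simp add: eventually_at_filter)
    ultimately show "\<forall>\<^sub>F t in at_left 0. (g t - g 0) / t \<le> a - C * t"
    proof eventually_elim
      case (elim t)
      then show ?case using div[of t] divide_right_mono_neg[OF elim(1), of t] by simp
    qed
  qed (use quot in simp)
  ultimately show ?thesis by simp
qed

lemma DERIV_norm_powr:
  fixes w v :: "'a::real_inner"
  assumes "w \<noteq> 0"
  shows "((\<lambda>t. norm (w + t *\<^sub>R v) powr q) has_real_derivative q * norm w powr (q - 2) * (w \<bullet> v)) (at 0)"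
proof -
  define P where "P t = w \<bullet> w + 2 * t * (w \<bullet> v) + t\<^sup>2 * (v \<bullet> v)" for t
  have norm_powr: "norm z powr r = (z \<bullet> z) powr (r / 2)" for z :: 'a and r
    by (simp add: norm_eq_sqrt_inner powr_half_sqrt[symmetric] powr_powr)
  have P: "norm (w + t *\<^sub>R v) powr q = P t powr (q / 2)" for t
    by (simp add: norm_powr P_def inner_add_left inner_add_right inner_commute power2_eq_square algebra_simps)
  have "((\<lambda>t. P t powr (q / 2)) has_real_derivative q / 2 * P 0 powr (q / 2 - of_nat 1) * (2 * (w \<bullet> v))) (at 0)"
    by (rule DERIV_fun_powr) (use assms in \<open>auto simp: P_def intro!: derivative_eq_intros\<close>)
  moreover have "P 0 powr (q / 2 - 1) = norm w powr (q - 2)"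
    by (simp add: norm_powr P_def diff_divide_distrib)
  ultimately show ?thesis by (simp add: P mult.assoc)
qed

text \<open>The cut-off at \<delta>, below which |\<omega>| \<le> 1, keeps the supremum finite; \<omega> itself need not be bounded.\<close>
definition abs_sup_upto :: "real \<Rightarrow> (real \<Rightarrow> real) \<Rightarrow> real \<Rightarrow> real" where
  "abs_sup_upto \<delta> \<omega> r = Sup ((\<lambda>t. \<bar>\<omega> t\<bar>) ` {0<..min r \<delta>})"

lemma abs_le_abs_sup_upto:
  assumes "\<And>t. 0 < t \<Longrightarrow> t \<le> \<delta> \<Longrightarrow> \<bar>\<omega> t\<bar> \<le> 1" "0 < t" "t \<le> r" "t \<le> \<delta>"
  shows "\<bar>\<omega> t\<bar> \<le> abs_sup_upto \<delta> \<omega> r"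
  unfolding abs_sup_upto_def
  by (rule cSup_upper) (use assms in \<open>auto simp: bdd_above_def intro!: exI[of _ 1]\<close>)

lemma abs_sup_upto_nonneg:
  assumes "\<And>t. 0 < t \<Longrightarrow> t \<le> \<delta> \<Longrightarrow> \<bar>\<omega> t\<bar> \<le> 1" "r > 0" "\<delta> > 0"
  shows "0 \<le> abs_sup_upto \<delta> \<omega> r"
proof -
  have "\<bar>\<omega> (min r \<delta>)\<bar> \<le> abs_sup_upto \<delta> \<omega> r"
    by (rule abs_le_abs_sup_upto[OF assms(1)]) (use assms in auto)
  then show ?thesis by (meson abs_ge_zero order_trans)
qed

lemma abs_sup_upto_tendsto_0:
  assumes \<omega>: "(\<omega> \<longlongrightarrow> 0) (at_right 0)" and "\<delta> > 0"
    and bound: "\<And>t. 0 < t \<Longrightarrow> t \<le> \<delta> \<Longrightarrow> \<bar>\<omega> t\<bar> \<le> 1"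
  shows "(abs_sup_upto \<delta> \<omega> \<longlongrightarrow> 0) (at_right 0)"
proof (rule tendstoI)
  fix e :: real
  assume "e > 0"
  then have "\<forall>\<^sub>F t in at_right 0. dist (\<omega> t) 0 < e / 2" by (intro tendstoD[OF \<omega>]) simp
  then obtain d where d: "d > 0" "\<And>t. 0 < t \<Longrightarrow> t < d \<Longrightarrow> \<bar>\<omega> t\<bar> < e / 2"
    unfolding eventually_at_right_field by auto
  have "\<forall>\<^sub>F r in at_right 0. 0 < r \<and> r < d"
    using d(1) by (simp add: eventually_at_right_field) (metis add_0)
  then show "\<forall>\<^sub>F r in at_right 0. dist (abs_sup_upto \<delta> \<omega> r) 0 < e"
  proof eventually_elim
    case (elim r)
    have "abs_sup_upto \<delta> \<omega> r \<le> e / 2"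
      unfolding abs_sup_upto_def
      by (rule cSup_least) (use elim \<open>\<delta> > 0\<close> d(2) in \<open>auto intro: less_imp_le\<close>)
    moreover have "0 \<le> abs_sup_upto \<delta> \<omega> r"
      using abs_sup_upto_nonneg[OF bound] elim \<open>\<delta> > 0\<close> by simp
    ultimately show ?case using \<open>e > 0\<close> by simp
  qed
qed

text \<open>A bound for |x - y|: the first term covers |x - y| \<le> \<delta>, where |\<omega>| \<le> 1, the second |x - y| > \<delta>.\<close>
definition infconv_radius :: "real \<Rightarrow> real \<Rightarrow> real \<Rightarrow> real" where
  "infconv_radius q \<delta> \<epsilon> = (q * \<epsilon> powr (q - 1)) powr (1 / q) + (q / \<delta>) powr (1 / (q - 1)) * \<epsilon>"

lemma infconv_radius_pos: "q > 0 \<Longrightarrow> \<delta> > 0 \<Longrightarrow> \<epsilon> > 0 \<Longrightarrow> infconv_radius q \<delta> \<epsilon> > 0"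
  unfolding infconv_radius_def by (simp add: add_nonneg_pos)

lemma infconv_radius_tendsto_0:
  assumes "q > 1"
  shows "(infconv_radius q \<delta> \<longlongrightarrow> 0) (at_right 0)"
proof -
  have "((\<lambda>\<epsilon>::real. \<epsilon> powr (q - 1)) \<longlongrightarrow> 0) (at_right 0)"
    by (rule tendsto_zero_powrI) (use assms in \<open>auto intro: tendsto_ident_at eventually_mono[OF eventually_at_right_less]\<close>)
  then have "((\<lambda>\<epsilon>::real. (q * \<epsilon> powr (q - 1)) powr (1 / q)) \<longlongrightarrow> 0) (at_right 0)"
    by (rule tendsto_zero_powrI[OF tendsto_mult_right_zero]) (use assms in auto)
  then show ?thesis
    unfolding infconv_radius_def[abs_def]
    using tendsto_add[OF _ tendsto_mult_right_zero[OF tendsto_ident_at]] by fastforce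
qed

lemma infconv_radius_bound:
  fixes \<omega> :: "real \<Rightarrow> real"
  assumes q: "q \<ge> 2" and "\<epsilon> > 0" "\<rho> > 0" "\<delta> > 0"
    and bound: "\<And>t. 0 < t \<Longrightarrow> t \<le> \<delta> \<Longrightarrow> \<bar>\<omega> t\<bar> \<le> 1"
    and slope: "\<And>t. 0 < t \<Longrightarrow> t \<le> \<rho> \<Longrightarrow> (\<rho> / \<epsilon>) powr (q - 1) * t \<le> q * \<omega> t"
  shows "\<rho> \<le> infconv_radius q \<delta> \<epsilon> \<and>
    \<rho> * (\<rho> / \<epsilon>) powr (q - 1) \<le> q * abs_sup_upto \<delta> \<omega> (infconv_radius q \<delta> \<epsilon>) + q / \<delta> * infconv_radius q \<delta> \<epsilon>"
proof -
  define n where "n = (\<rho> / \<epsilon>) powr (q - 1)"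
  define R where "R = infconv_radius q \<delta> \<epsilon>"
  have R: "R > 0" using assms by (simp add: R_def infconv_radius_pos)
  have W: "0 \<le> abs_sup_upto \<delta> \<omega> R" by (rule abs_sup_upto_nonneg[OF bound R \<open>\<delta> > 0\<close>])
  have R_ge: "(q * \<epsilon> powr (q - 1)) powr (1 / q) \<le> R" "(q / \<delta>) powr (1 / (q - 1)) * \<epsilon> \<le> R"
    using assms by (simp_all add: R_def infconv_radius_def)
  show ?thesis
  proof (cases "\<rho> \<le> \<delta>")
    case True
    have "\<rho> * n \<le> q * \<omega> \<rho>" using slope[of \<rho>] \<open>\<rho> > 0\<close> by (simp add: n_def mult.commute)
    also have "\<dots> \<le> q" using bound[of \<rho>] True \<open>\<rho> > 0\<close> q by (simp add: mult_left_le)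
    finally have "\<rho> * n \<le> q" .
    moreover have "\<rho> * n = \<rho> powr q / \<epsilon> powr (q - 1)"
      using assms powr_add[of \<rho> 1 "q - 1"] by (simp add: n_def powr_divide)
    ultimately have "\<rho> powr q \<le> q * \<epsilon> powr (q - 1)" using \<open>\<epsilon> > 0\<close> by (simp add: field_simps)
    then have "(\<rho> powr q) powr (1 / q) \<le> (q * \<epsilon> powr (q - 1)) powr (1 / q)"
      using q by (intro powr_mono2) auto
    then have \<rho>R: "\<rho> \<le> R" using R_ge(1) q \<open>\<rho> > 0\<close> by (simp add: powr_powr)
    have "\<rho> * n \<le> q * \<bar>\<omega> \<rho>\<bar>" using \<open>\<rho> * n \<le> q * \<omega> \<rho>\<close> q by (smt (verit) abs_ge_self mult_left_mono)
    also have "\<dots> \<le> q * abs_sup_upto \<delta> \<omega> R"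
      using abs_le_abs_sup_upto[OF bound \<open>\<rho> > 0\<close> \<rho>R True] q by simp
    moreover have "0 \<le> q / \<delta> * R" using R q \<open>\<delta> > 0\<close> by simp
    ultimately show ?thesis using \<rho>R by (simp add: n_def R_def)
  next
    case False
    have "n * \<delta> \<le> q * \<omega> \<delta>" using slope[of \<delta>] False \<open>\<delta> > 0\<close> by (simp add: n_def)
    also have "\<dots> \<le> q" using bound[of \<delta>] \<open>\<delta> > 0\<close> q by (simp add: mult_left_le)
    finally have nq: "n \<le> q / \<delta>" using \<open>\<delta> > 0\<close> by (simp add: field_simps)
    then have "n powr (1 / (q - 1)) \<le> (q / \<delta>) powr (1 / (q - 1))"
      using q by (intro powr_mono2) (auto simp: n_def)
    moreover have "n powr (1 / (q - 1)) = \<rho> / \<epsilon>"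
      using assms by (simp add: n_def powr_powr)
    ultimately have \<rho>R: "\<rho> \<le> R" using R_ge(2) \<open>\<epsilon> > 0\<close> by (simp add: field_simps)
    have "\<rho> * n \<le> R * (q / \<delta>)" using \<rho>R nq \<open>\<rho> > 0\<close> by (intro mult_mono) (auto simp: n_def)
    then show ?thesis using \<rho>R W q by (simp add: n_def R_def mult.commute add_increasing)
  qed
qed

lemma infconv_error_tendsto_0:
  assumes \<omega>: "(\<omega> \<longlongrightarrow> 0) (at_right 0)" and "q \<ge> 2" "\<delta> > 0"
    and bound: "\<And>t. 0 < t \<Longrightarrow> t \<le> \<delta> \<Longrightarrow> \<bar>\<omega> t\<bar> \<le> 1"
  shows "((\<lambda>\<epsilon>. - K * (infconv_radius q \<delta> \<epsilon> * (1 + q / \<delta>) + q * abs_sup_upto \<delta> \<omega> (infconv_radius q \<delta> \<epsilon>)))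
    \<longlongrightarrow> 0) (at_right 0)"
proof -
  define R where "R = infconv_radius q \<delta>"
  have "(R \<longlongrightarrow> 0) (at_right 0)" unfolding R_def by (rule infconv_radius_tendsto_0) (use assms(2) in simp)
  moreover have "filterlim R (at_right 0) (at_right 0)"
    using calculation eventually_at_right_less[of 0] assms(2,3)
    by (intro tendsto_imp_filterlim_at_right) (auto elim: eventually_mono simp: R_def infconv_radius_pos)
  then have "((\<lambda>\<epsilon>. abs_sup_upto \<delta> \<omega> (R \<epsilon>)) \<longlongrightarrow> 0) (at_right 0)"
    using abs_sup_upto_tendsto_0[OF \<omega> \<open>\<delta> > 0\<close> bound] by (rule filterlim_compose[rotated])
  ultimately have "((\<lambda>\<epsilon>. R \<epsilon> * (1 + q / \<delta>) + q * abs_sup_upto \<delta> \<omega> (R \<epsilon>)) \<longlongrightarrow> 0) (at_right 0)"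
    using tendsto_add[OF tendsto_mult_left_zero tendsto_mult_right_zero] by fastforce
  then show ?thesis unfolding R_def by (rule tendsto_mult_right_zero)
qed

section \<open>Matrices and the operator F\<close>

definition outer :: "real^'n \<Rightarrow> real^'n \<Rightarrow> real^'n^'n" where
  "outer a b = (\<chi> i j. a$i * b$j)"

lemma outer_mult_vec: "outer a b *v h = (b \<bullet> h) *\<^sub>R a"
  by (simp add: outer_def matrix_vector_mult_def inner_vec_def vec_eq_iff sum_distrib_left mult_ac)

lemma trace_outer: "trace (outer a b) = a \<bullet> b"
  by (simp add: outer_def trace_def inner_vec_def)

lemma transpose_outer: "transpose (outer a b) = outer b a"
  by (simp add: outer_def transpose_def vec_eq_iff mult_ac)

lemma trace_scaleR: "trace (c *\<^sub>R (A::real^'n^'n)) = c * trace A"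
  by (simp add: trace_def sum_distrib_left)

lemma transpose_add: "transpose ((A::real^'n^'n) + B) = transpose A + transpose B"
  by (simp add: transpose_def vec_eq_iff)

lemma symmetric_mat_inner_commute:
  assumes "symmetric_mat X"
  shows "(X *v a) \<bullet> b = a \<bullet> (X *v b)"
proof -
  have "a \<bullet> (X *v b) = (a v* X) \<bullet> b" by (simp add: dot_lmul_matrix)
  also have "a v* X = transpose X *v a" by simp
  also have "\<dots> = X *v a" using assms by (simp add: symmetric_mat_def)
  finally show ?thesis by simp
qed

lemma quadratic_form_add_scaleR:
  assumes "symmetric_mat X"
  shows "(X *v (h + \<tau> *\<^sub>R e)) \<bullet> (h + \<tau> *\<^sub>R e)
    = (X *v h) \<bullet> h + 2 * \<tau> * ((X *v e) \<bullet> h) + \<tau>\<^sup>2 * ((X *v e) \<bullet> e)"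
  using symmetric_mat_inner_commute[OF assms, of h e]
  by (simp add: matrix_vector_right_distrib matrix_vector_mult_scaleR inner_add_left inner_add_right
      inner_commute power2_eq_square algebra_simps)

text \<open>For |e| = 1 and A = I + c e e^T one has A^T X A = stretch_update X e c (c^2 (X e . e)); the free
  coefficient d leaves room for the second order Taylor term of |.|^q along e.\<close>
definition stretch_update :: "real^'n^'n \<Rightarrow> real^'n \<Rightarrow> real \<Rightarrow> real \<Rightarrow> real^'n^'n" where
  "stretch_update X e c d = X + c *\<^sub>R (outer e (X *v e) + outer (X *v e) e) + d *\<^sub>R outer e e"

lemma stretch_update_quadratic_form:
  "(stretch_update X e c d *v h) \<bullet> h = (X *v h) \<bullet> h + 2 * c * (e \<bullet> h) * ((X *v e) \<bullet> h) + d * (e \<bullet> h)\<^sup>2"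
  by (simp add: stretch_update_def matrix_vector_mult_add_rdistrib scaleR_matrix_vector_assoc[symmetric]
      outer_mult_vec inner_add_left inner_commute power2_eq_square algebra_simps)

lemma symmetric_stretch_update: "symmetric_mat X \<Longrightarrow> symmetric_mat (stretch_update X e c d)"
  by (simp add: symmetric_mat_def stretch_update_def transpose_add transpose_scalar transpose_outer add.commute)

lemma trace_stretch_update:
  "trace (stretch_update X e c d) = trace X + 2 * c * ((X *v e) \<bullet> e) + d * (e \<bullet> e)"
  by (simp add: stretch_update_def trace_add trace_scaleR trace_outer inner_commute algebra_simps)

lemma Fop_scaleR:
  assumes "c \<noteq> 0"
  shows "Fop p x (c *\<^sub>R \<eta>) X = Fop p x \<eta> X"
proof -
  have "(X *v (c *\<^sub>R \<eta>)) \<bullet> (c *\<^sub>R \<eta>) = c\<^sup>2 * ((X *v \<eta>) \<bullet> \<eta>)"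
    by (simp add: matrix_vector_mult_scaleR power2_eq_square)
  moreover have "(norm (c *\<^sub>R \<eta>))\<^sup>2 = c\<^sup>2 * (norm \<eta>)\<^sup>2"
    by (simp add: power_mult_distrib)
  ultimately show ?thesis using assms by (simp add: Fop_def)
qed

lemma Fop_unit: "norm e = 1 \<Longrightarrow> Fop p x e X = - (trace X + (p x - 2) * ((X *v e) \<bullet> e))"
  by (simp add: Fop_def)

section \<open>The inf-convolution\<close>

lemma infconv_le:
  assumes "bdd_below (u ` \<Omega>)" "q \<ge> 0" "y \<in> \<Omega>"
  shows "infconv \<Omega> u q \<epsilon> z \<le> u y + norm (z - y) powr q / (q * \<epsilon> powr (q - 1))"
  unfolding infconv_def
proof (rule cINF_lower[OF _ assms(3)])
  obtain m where "\<And>w. w \<in> \<Omega> \<Longrightarrow> m \<le> u w" using assms(1) by (auto simp: bdd_below_def)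
  then have "\<And>w. w \<in> \<Omega> \<Longrightarrow> m \<le> u w + norm (z - w) powr q / (q * \<epsilon> powr (q - 1))"
    using assms(2) by (simp add: add_increasing2)
  then show "bdd_below ((\<lambda>w. u w + norm (z - w) powr q / (q * \<epsilon> powr (q - 1))) ` \<Omega>)"
    by (auto simp: bdd_below_def)
qed

text \<open>Beyond the radius rad the penalty exceeds the oscillation of u.\<close>
lemma infconv_penalty_beyond_rad:
  assumes "bounded (u ` \<Omega>)" "q > 0" "\<epsilon> > 0" "x \<in> \<Omega>" "w \<in> \<Omega>" "rad \<Omega> u q \<epsilon> < norm (x - w)"
  shows "u x < u w + norm (x - w) powr q / (q * \<epsilon> powr (q - 1))"
proof -
  define c where "c = q * \<epsilon> powr (q - 1)"
  have c: "c > 0" using assms by (simp add: c_def)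
  have bdd: "bdd_above (u ` \<Omega>)" "bdd_below (u ` \<Omega>)"
    using assms(1) by (auto simp: bounded_imp_bdd_above bounded_imp_bdd_below)
  have osc_ge: "u a - u b \<le> osc \<Omega> u" if "a \<in> \<Omega>" "b \<in> \<Omega>" for a b
    unfolding osc_def using cSup_upper[OF _ bdd(1)] cINF_lower[OF bdd(2)] that
    by (smt (verit) imageI)
  have osc: "osc \<Omega> u \<ge> 0" using osc_ge[of x x] assms(4) by simp
  have "c * osc \<Omega> u = rad \<Omega> u q \<epsilon> powr q"
    using assms c osc by (simp add: rad_def c_def powr_powr)
  also have "\<dots> < norm (x - w) powr q"
    using assms by (intro powr_less_mono2) (auto simp: rad_def)
  finally have "osc \<Omega> u < norm (x - w) powr q / c" using c by (simp add: field_simps)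
  then show ?thesis using osc_ge[OF assms(4,5)] by (simp add: c_def)
qed

lemma cball_subset_if_less_infdist_frontier:
  fixes S :: "'a::real_normed_vector set"
  assumes "x \<in> S" "R < infdist x (frontier S)"
  shows "cball x R \<subseteq> S"
proof (rule ccontr)
  assume "\<not> cball x R \<subseteq> S"
  then have "R \<ge> 0" "cball x R - S \<noteq> {}" by auto
  then have "cball x R \<inter> S \<noteq> {}" using assms(1) by (metis IntI empty_iff centre_in_cball)
  then have "cball x R \<inter> frontier S \<noteq> {}"
    using \<open>cball x R - S \<noteq> {}\<close> by (intro connected_Int_frontier) (simp_all add: convex_connected)
  then obtain f where "f \<in> cball x R" "f \<in> frontier S" by auto
  then show False using infdist_le[of f "frontier S" x] assms(2) by simp
qed

lemma infconv_attained:
  assumes "continuous_on \<Omega> u" "bounded (u ` \<Omega>)" "q > 0" "\<epsilon> > 0"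
    and x: "x \<in> inner_set \<Omega> (rad \<Omega> u q \<epsilon>)"
  obtains y where "closed_segment x y \<subseteq> \<Omega>"
    and "infconv \<Omega> u q \<epsilon> x = u y + norm (x - y) powr q / (q * \<epsilon> powr (q - 1))"
proof -
  define h where "h w = u w + norm (x - w) powr q / (q * \<epsilon> powr (q - 1))" for w
  define R where "R = (rad \<Omega> u q \<epsilon> + infdist x (frontier \<Omega>)) / 2"
  have x\<Omega>: "x \<in> \<Omega>" and R: "rad \<Omega> u q \<epsilon> < R" "R < infdist x (frontier \<Omega>)"
    using x by (auto simp: inner_set_def R_def)
  have cball: "cball x R \<subseteq> \<Omega>" by (rule cball_subset_if_less_infdist_frontier[OF x\<Omega> R(2)])
  have x_cball: "x \<in> cball x R" using R by (simp add: rad_def) (smt (verit) powr_ge_zero)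
  have "continuous_on (cball x R) (\<lambda>w. norm (x - w) powr q)"
    by (rule continuous_on_powr') (use assms(3) in \<open>auto intro!: continuous_intros\<close>)
  then have "continuous_on (cball x R) h"
    unfolding h_def using continuous_on_subset[OF assms(1) cball] assms(3,4)
    by (intro continuous_on_add continuous_on_divide continuous_on_const) auto
  then obtain y where y: "y \<in> cball x R" and ymin: "\<And>w. w \<in> cball x R \<Longrightarrow> h y \<le> h w"
    using continuous_attains_inf[OF compact_cball] x_cball by blast
  have "h y \<le> h w" if "w \<in> \<Omega>" for w
  proof (cases "w \<in> cball x R")
    case False
    then have "u x < h w"
      using infconv_penalty_beyond_rad[OF assms(2-4) x\<Omega> that] R(1) by (simp add: h_def dist_norm)
    then show ?thesis using ymin[OF x_cball] by (simp add: h_def)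
  qed (rule ymin)
  then have "infconv \<Omega> u q \<epsilon> x = h y"
    using y cball assms(2,3) infconv_le[of u \<Omega> q y \<epsilon> x]
    by (intro antisym) (auto simp: h_def infconv_def bounded_imp_bdd_below intro!: cINF_greatest)
  moreover have "closed_segment x y \<subseteq> \<Omega>"
    using closed_segment_subset[OF x_cball y convex_cball] cball by blast
  ultimately show ?thesis using that by (simp add: h_def)
qed

section \<open>Subjets of the inf-convolution\<close>

lemma subjet2_touching_above_along_line:
  assumes "open \<Omega>" "x \<in> \<Omega>" "(\<eta>, X) \<in> subjet2 \<Omega> v x"
    and le: "\<And>z. z \<in> \<Omega> \<Longrightarrow> v z \<le> \<phi> z" and eq: "v x = \<phi> x"
  shows "\<forall>\<^sub>F t in at 0. t * (\<eta> \<bullet> d) - (\<bar>(X *v d) \<bullet> d\<bar> / 2 + (norm d)\<^sup>2) * t\<^sup>2 \<le> \<phi> (x + t *\<^sub>R d) - \<phi> x"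
proof -
  obtain \<delta> where "\<delta> > 0" and sub: "\<And>z. z \<in> \<Omega> \<Longrightarrow> norm (z - x) < \<delta> \<Longrightarrow>
      v x + \<eta> \<bullet> (z - x) + 1 / 2 * ((X *v (z - x)) \<bullet> (z - x)) - 1 * (norm (z - x))\<^sup>2 \<le> v z"
    using assms(3) unfolding subjet2_def by (auto dest!: spec[of _ 1])
  have "((\<lambda>t. x + t *\<^sub>R d) \<longlongrightarrow> x + 0 *\<^sub>R d) (at 0)" by (intro tendsto_intros)
  then have "\<forall>\<^sub>F t in at 0. x + t *\<^sub>R d \<in> \<Omega>"
    using topological_tendstoD assms(1,2) by fastforce
  moreover have "((\<lambda>t. norm (t *\<^sub>R d)) \<longlongrightarrow> norm (0 *\<^sub>R d)) (at (0::real))" by (intro tendsto_intros)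
  then have "\<forall>\<^sub>F t in at 0. norm (t *\<^sub>R d) < \<delta>" using order_tendstoD(2) \<open>\<delta> > 0\<close> by fastforce
  ultimately show ?thesis
  proof eventually_elim
    case (elim t)
    have quad: "(X *v (t *\<^sub>R d)) \<bullet> (t *\<^sub>R d) = t\<^sup>2 * ((X *v d) \<bullet> d)"
      by (simp add: matrix_vector_mult_scaleR power2_eq_square)
    have "- \<bar>(X *v d) \<bullet> d\<bar> * t\<^sup>2 \<le> ((X *v d) \<bullet> d) * t\<^sup>2"
      by (intro mult_right_mono) auto
    then have "t * (\<eta> \<bullet> d) - (\<bar>(X *v d) \<bullet> d\<bar> / 2 + (norm d)\<^sup>2) * t\<^sup>2
        \<le> t * (\<eta> \<bullet> d) + 1 / 2 * (((X *v d) \<bullet> d) * t\<^sup>2) - (norm d)\<^sup>2 * t\<^sup>2"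
      by (simp add: algebra_simps)
    also have "\<dots> = \<eta> \<bullet> (t *\<^sub>R d) + 1 / 2 * ((X *v (t *\<^sub>R d)) \<bullet> (t *\<^sub>R d)) - 1 * (norm (t *\<^sub>R d))\<^sup>2"
      by (simp add: quad power_mult_distrib power2_eq_square algebra_simps)
    also have "\<dots> \<le> v (x + t *\<^sub>R d) - v x" using sub[of "x + t *\<^sub>R d"] elim by simp
    also have "\<dots> \<le> \<phi> (x + t *\<^sub>R d) - \<phi> x" using le[OF elim(1)] eq by simp
    finally show ?case .
  qed
qed

lemma subjet2_touching_flat_power:
  assumes "open \<Omega>" "x \<in> \<Omega>" "q \<ge> 2" "c > 0"
    and le: "\<And>z. z \<in> \<Omega> \<Longrightarrow> v z \<le> v x + norm (z - x) powr q / c"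
    and sub: "(\<eta>, X) \<in> subjet2 \<Omega> v x"
  shows "\<eta> = 0"
proof -
  define C where "C = \<bar>(X *v \<eta>) \<bullet> \<eta>\<bar> / 2 + (norm \<eta>)\<^sup>2"
  have "\<forall>\<^sub>F t in at 0. t * (\<eta> \<bullet> \<eta>) - C * t\<^sup>2 \<le> norm (t *\<^sub>R \<eta>) powr q / c"
    using subjet2_touching_above_along_line[OF assms(1,2) sub, of "\<lambda>z. v x + norm (z - x) powr q / c" \<eta>]
      le assms(3) by (simp add: C_def)
  then obtain r where "r > 0" and r: "\<And>t. t \<noteq> 0 \<Longrightarrow> dist t 0 < r \<Longrightarrow>
      t * (\<eta> \<bullet> \<eta>) - C * t\<^sup>2 \<le> norm (t *\<^sub>R \<eta>) powr q / c"
    unfolding eventually_at by auto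
  have "\<eta> \<bullet> \<eta> \<le> 0"
  proof (rule nonpos_if_linear_le_quadratic[of "min r 1" _ "C + norm \<eta> powr q / c"])
    fix t :: real
    assume t: "0 < t" "t < min r 1"
    have "t powr q \<le> t powr 2" using t assms(3) by (intro powr_mono') auto
    then have "norm (t *\<^sub>R \<eta>) powr q / c \<le> t\<^sup>2 * (norm \<eta> powr q / c)"
      using assms(4) t by (simp add: powr_mult divide_right_mono mult_right_mono)
    then show "t * (\<eta> \<bullet> \<eta>) \<le> (C + norm \<eta> powr q / c) * t\<^sup>2"
      using r[of t] t by (simp add: algebra_simps)
  qed (use \<open>r > 0\<close> in simp)
  then show ?thesis using inner_gt_zero_iff[of \<eta>] by linarith
qed

lemma subjet2_touching_power_gradient:
  assumes "open \<Omega>" "x \<in> \<Omega>" "q \<ge> 2" "\<epsilon> > 0"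
    and le: "\<And>z. z \<in> \<Omega> \<Longrightarrow> v z \<le> a + norm (z - y) powr q / (q * \<epsilon> powr (q - 1))"
    and eq: "v x = a + norm (x - y) powr q / (q * \<epsilon> powr (q - 1))"
    and sub: "(\<eta>, X) \<in> subjet2 \<Omega> v x" and "\<eta> \<noteq> 0"
  shows "x \<noteq> y \<and> \<eta> = (norm (x - y) / \<epsilon>) powr (q - 1) *\<^sub>R sgn (x - y)"
proof -
  define c where "c = q * \<epsilon> powr (q - 1)"
  have c: "c > 0" using assms by (simp add: c_def)
  define w where "w = x - y"
  have line: "\<forall>\<^sub>F t in at 0. t * (\<eta> \<bullet> d) - (\<bar>(X *v d) \<bullet> d\<bar> / 2 + (norm d)\<^sup>2) * t\<^sup>2
      \<le> norm (w + t *\<^sub>R d) powr q / c - norm (w + 0 *\<^sub>R d) powr q / c" for d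
    using subjet2_touching_above_along_line[OF assms(1,2) sub, of "\<lambda>z. a + norm (z - y) powr q / c" d] le eq
    by (simp add: c_def w_def algebra_simps)
  have "w \<noteq> 0"
  proof
    assume "w = 0"
    then have "\<eta> = 0"
      using le eq assms(3) by (intro subjet2_touching_flat_power[OF assms(1,2,3) c _ sub]) (simp add: w_def c_def)
    with \<open>\<eta> \<noteq> 0\<close> show False ..
  qed
  define k where "k = norm w powr (q - 2) / \<epsilon> powr (q - 1)"
  have "\<eta> \<bullet> d = k * (w \<bullet> d)" for d
  proof -
    have "((\<lambda>t. norm (w + t *\<^sub>R d) powr q / c) has_real_derivative q * norm w powr (q - 2) * (w \<bullet> d) / c) (at 0)"
      by (rule DERIV_cdivide[OF DERIV_norm_powr[OF \<open>w \<noteq> 0\<close>]])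
    from DERIV_eq_of_quadratic_lower_bound[OF this line[of d]] show ?thesis
      using assms by (simp add: k_def c_def)
  qed
  from this[of "\<eta> - k *\<^sub>R w"] have "(\<eta> - k *\<^sub>R w) \<bullet> (\<eta> - k *\<^sub>R w) = 0"
    by (simp add: inner_diff_left inner_diff_right inner_commute algebra_simps)
  then have "\<eta> = k *\<^sub>R w" by simp
  also have "k *\<^sub>R w = (norm w / \<epsilon>) powr (q - 1) *\<^sub>R sgn w"
    using \<open>w \<noteq> 0\<close> powr_add[of "norm w" "q - 2" 1] assms(4)
    by (simp add: k_def sgn_div_norm powr_divide divide_simps)
  finally show ?thesis using \<open>w \<noteq> 0\<close> by (simp add: w_def)
qed

lemma infconv_increment_along_sgn:
  assumes "q \<ge> 2" "\<epsilon> > 0" "x \<noteq> y" "\<bar>\<tau>\<bar> \<le> norm (x - y) / 2" "y + h \<in> \<Omega>"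
    and le: "\<And>z w. w \<in> \<Omega> \<Longrightarrow> v z \<le> u w + norm (z - w) powr q / (q * \<epsilon> powr (q - 1))"
    and eq: "v x = u y + norm (x - y) powr q / (q * \<epsilon> powr (q - 1))"
  shows "v (x + h + \<tau> *\<^sub>R sgn (x - y)) - v x \<le> u (y + h) - u y + (norm (x - y) / \<epsilon>) powr (q - 1) * \<tau>
    + (q - 1) * (2 * norm (x - y)) powr (q - 2) / \<epsilon> powr (q - 1) / 2 * \<tau>\<^sup>2"
proof -
  define \<rho> where "\<rho> = norm (x - y)"
  define c where "c = q * \<epsilon> powr (q - 1)"
  have "\<rho> > 0" "c > 0" using assms by (auto simp: \<rho>_def c_def)
  have "x + h + \<tau> *\<^sub>R sgn (x - y) - (y + h) = (\<rho> + \<tau>) *\<^sub>R sgn (x - y)"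
    using \<open>\<rho> > 0\<close> by (simp add: \<rho>_def sgn_div_norm scaleR_add_left algebra_simps)
  then have "norm (x + h + \<tau> *\<^sub>R sgn (x - y) - (y + h)) = \<rho> + \<tau>"
    using assms(3,4) by (simp add: \<rho>_def norm_sgn)
  then have "v (x + h + \<tau> *\<^sub>R sgn (x - y)) - v x \<le> u (y + h) - u y + ((\<rho> + \<tau>) powr q - \<rho> powr q) / c"
    using le[OF assms(5), of "x + h + \<tau> *\<^sub>R sgn (x - y)"] eq by (simp add: \<rho>_def c_def diff_divide_distrib)
  also have "((\<rho> + \<tau>) powr q - \<rho> powr q) / c \<le> (q * \<rho> powr (q - 1) * \<tau> + q * (q - 1) / 2 * (2 * \<rho>) powr (q - 2) * \<tau>\<^sup>2) / c"
    using powr_taylor_upper[OF \<open>\<rho> > 0\<close> assms(1), of \<tau>] assms(4) \<open>c > 0\<close>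
    by (intro divide_right_mono) (auto simp: \<rho>_def)
  also have "\<dots> = (\<rho> / \<epsilon>) powr (q - 1) * \<tau> + (q - 1) * (2 * \<rho>) powr (q - 2) / \<epsilon> powr (q - 1) / 2 * \<tau>\<^sup>2"
    using assms(1,2) \<open>\<rho> > 0\<close> by (simp add: c_def powr_divide add_divide_distrib)
  finally show ?thesis by (simp add: \<rho>_def)
qed

lemma infconv_stretch_test_inequality:
  fixes \<alpha> :: real
  assumes "q \<ge> 2" "\<epsilon> > 0" "x \<noteq> y" "symmetric_mat X" "y + h \<in> \<Omega>"
    and le: "\<And>z w. w \<in> \<Omega> \<Longrightarrow> v z \<le> u w + norm (z - w) powr q / (q * \<epsilon> powr (q - 1))"
    and eq: "v x = u y + norm (x - y) powr q / (q * \<epsilon> powr (q - 1))"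
    and \<eta>: "\<eta> = (norm (x - y) / \<epsilon>) powr (q - 1) *\<^sub>R sgn (x - y)"
  defines "e \<equiv> sgn (x - y)" and "a \<equiv> (q - 1) * (2 * norm (x - y)) powr (q - 2) / \<epsilon> powr (q - 1)"
    and "\<tau> \<equiv> (\<alpha> - 1) * (sgn (x - y) \<bullet> h)"
  assumes "\<bar>\<tau>\<bar> \<le> norm (x - y) / 2"
    and test: "v x + \<eta> \<bullet> (h + \<tau> *\<^sub>R e) + 1 / 2 * ((X *v (h + \<tau> *\<^sub>R e)) \<bullet> (h + \<tau> *\<^sub>R e)) - r
      \<le> v (x + h + \<tau> *\<^sub>R e)"
  shows "u y + \<eta> \<bullet> h + 1 / 2 * ((stretch_update X e (\<alpha> - 1) ((\<alpha> - 1)\<^sup>2 * ((X *v e) \<bullet> e - a)) *v h) \<bullet> h) - r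
    \<le> u (y + h)"
proof -
  have "e \<bullet> e = 1" using \<open>x \<noteq> y\<close> by (simp add: e_def norm_sgn dot_square_norm)
  have "v (x + h + \<tau> *\<^sub>R e) - v x \<le> u (y + h) - u y + (norm (x - y) / \<epsilon>) powr (q - 1) * \<tau> + a / 2 * \<tau>\<^sup>2"
    unfolding e_def a_def by (rule infconv_increment_along_sgn[OF assms(1-3) _ assms(5) le eq]) (use assms(12) in simp)
  moreover have "\<eta> \<bullet> (h + \<tau> *\<^sub>R e) = \<eta> \<bullet> h + (norm (x - y) / \<epsilon>) powr (q - 1) * \<tau>"
    using \<open>e \<bullet> e = 1\<close> by (simp add: \<eta> e_def[symmetric] inner_add_right)
  moreover have "(X *v (h + \<tau> *\<^sub>R e)) \<bullet> (h + \<tau> *\<^sub>R e) - a * \<tau>\<^sup>2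
      = (stretch_update X e (\<alpha> - 1) ((\<alpha> - 1)\<^sup>2 * ((X *v e) \<bullet> e - a)) *v h) \<bullet> h"
    unfolding quadratic_form_add_scaleR[OF assms(4)] stretch_update_quadratic_form
    using symmetric_mat_inner_commute[OF assms(4), of e h]
    by (simp add: \<tau>_def e_def inner_commute power2_eq_square algebra_simps)
  ultimately show ?thesis using test by linarith
qed

text \<open>Testing u at y + h through the point x + h + (\<alpha> - 1)(e . h) e turns a subjet of the
  inf-convolution v at x into one of u at y; the extra second order term comes from the curvature
  of |.|^q along e.\<close>
lemma subjet2_infconv_stretch:
  assumes "open \<Omega>" "x \<in> \<Omega>" "q \<ge> 2" "\<epsilon> > 0" "x \<noteq> y"
    and le: "\<And>z w. w \<in> \<Omega> \<Longrightarrow> v z \<le> u w + norm (z - w) powr q / (q * \<epsilon> powr (q - 1))"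
    and eq: "v x = u y + norm (x - y) powr q / (q * \<epsilon> powr (q - 1))"
    and sub: "(\<eta>, X) \<in> subjet2 \<Omega> v x"
    and \<eta>: "\<eta> = (norm (x - y) / \<epsilon>) powr (q - 1) *\<^sub>R sgn (x - y)"
  defines "e \<equiv> sgn (x - y)" and "a \<equiv> (q - 1) * (2 * norm (x - y)) powr (q - 2) / \<epsilon> powr (q - 1)"
  shows "(\<eta>, stretch_update X e (\<alpha> - 1) ((\<alpha> - 1)\<^sup>2 * ((X *v e) \<bullet> e - a))) \<in> subjet2 \<Omega> u y"
proof -
  define Y where "Y = stretch_update X e (\<alpha> - 1) ((\<alpha> - 1)\<^sup>2 * ((X *v e) \<bullet> e - a))"
  define \<beta> where "\<beta> = 1 + \<bar>\<alpha> - 1\<bar>"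
  have "\<beta> \<ge> 1" by (simp add: \<beta>_def)
  have e: "norm e = 1" using \<open>x \<noteq> y\<close> by (simp add: e_def norm_sgn)
  have symX: "symmetric_mat X" using sub by (simp add: subjet2_def)
  have "\<exists>\<delta>>0. \<forall>z\<in>\<Omega>. norm (z - y) < \<delta> \<longrightarrow>
      u y + \<eta> \<bullet> (z - y) + 1 / 2 * ((Y *v (z - y)) \<bullet> (z - y)) - e0 * (norm (z - y))\<^sup>2 \<le> u z"
    if "e0 > 0" for e0
  proof -
    obtain \<delta>1 where "\<delta>1 > 0" and sub1: "\<And>z. z \<in> \<Omega> \<Longrightarrow> norm (z - x) < \<delta>1 \<Longrightarrow>
        v x + \<eta> \<bullet> (z - x) + 1 / 2 * ((X *v (z - x)) \<bullet> (z - x)) - e0 / \<beta>\<^sup>2 * (norm (z - x))\<^sup>2 \<le> v z"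
      using sub \<open>e0 > 0\<close> \<open>\<beta> \<ge> 1\<close> unfolding subjet2_def by (auto dest!: spec[of _ "e0 / \<beta>\<^sup>2"])
    obtain \<delta>2 where "\<delta>2 > 0" "ball x \<delta>2 \<subseteq> \<Omega>"
      using assms(1,2) open_contains_ball by blast
    define \<delta> where "\<delta> = min \<delta>1 (min \<delta>2 (norm (x - y) / 2)) / \<beta>"
    have "\<delta> > 0" using \<open>\<delta>1 > 0\<close> \<open>\<delta>2 > 0\<close> \<open>x \<noteq> y\<close> \<open>\<beta> \<ge> 1\<close> by (simp add: \<delta>_def)
    moreover have "u y + \<eta> \<bullet> h + 1 / 2 * ((Y *v h) \<bullet> h) - e0 * (norm h)\<^sup>2 \<le> u (y + h)"
      if "y + h \<in> \<Omega>" "norm h < \<delta>" for h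
    proof -
      define \<tau> where "\<tau> = (\<alpha> - 1) * (e \<bullet> h)"
      have \<tau>_le: "\<bar>\<tau>\<bar> \<le> \<bar>\<alpha> - 1\<bar> * norm h"
        using Cauchy_Schwarz_ineq2[of e h] e by (simp add: \<tau>_def abs_mult mult_left_mono)
      have \<beta>h: "\<beta> * norm h = norm h + \<bar>\<alpha> - 1\<bar> * norm h" by (simp add: \<beta>_def distrib_right)
      have \<tau>: "\<bar>\<tau>\<bar> \<le> \<beta> * norm h" using \<tau>_le \<beta>h norm_ge_zero[of h] by linarith
      have Ah: "norm (h + \<tau> *\<^sub>R e) \<le> \<beta> * norm h"
        using norm_triangle_ineq[of h "\<tau> *\<^sub>R e"] e \<tau>_le \<beta>h by simp
      have small: "\<beta> * norm h < min \<delta>1 (min \<delta>2 (norm (x - y) / 2))"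
        using that(2) \<open>\<beta> \<ge> 1\<close> by (simp add: \<delta>_def field_simps)
      have "x + (h + \<tau> *\<^sub>R e) \<in> ball x \<delta>2" using Ah small norm_minus_cancel[of "h + \<tau> *\<^sub>R e"] by (simp add: dist_norm)
      then have "x + (h + \<tau> *\<^sub>R e) \<in> \<Omega>" using \<open>ball x \<delta>2 \<subseteq> \<Omega>\<close> by blast
      then have "v x + \<eta> \<bullet> (h + \<tau> *\<^sub>R e) + 1 / 2 * ((X *v (h + \<tau> *\<^sub>R e)) \<bullet> (h + \<tau> *\<^sub>R e))
          - e0 / \<beta>\<^sup>2 * (norm (h + \<tau> *\<^sub>R e))\<^sup>2 \<le> v (x + h + \<tau> *\<^sub>R e)"
        using sub1[of "x + (h + \<tau> *\<^sub>R e)"] Ah small by (simp add: add.assoc)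
      from infconv_stretch_test_inequality[OF assms(3-5) symX that(1) le eq \<eta> _ this[unfolded e_def \<tau>_def]]
      have "u y + \<eta> \<bullet> h + 1 / 2 * ((Y *v h) \<bullet> h) - e0 / \<beta>\<^sup>2 * (norm (h + \<tau> *\<^sub>R e))\<^sup>2 \<le> u (y + h)"
        using \<tau> small by (simp add: Y_def e_def a_def \<tau>_def)
      moreover have "e0 / \<beta>\<^sup>2 * (norm (h + \<tau> *\<^sub>R e))\<^sup>2 \<le> e0 * (norm h)\<^sup>2"
      proof -
        have "e0 / \<beta>\<^sup>2 * (norm (h + \<tau> *\<^sub>R e))\<^sup>2 \<le> e0 / \<beta>\<^sup>2 * (\<beta> * norm h)\<^sup>2"
          using Ah \<open>e0 > 0\<close> by (intro mult_left_mono power_mono) auto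
        then show ?thesis using \<open>\<beta> \<ge> 1\<close> by (simp add: power_mult_distrib)
      qed
      ultimately show ?thesis by linarith
    qed
    ultimately show ?thesis
      by (intro exI[of _ \<delta>]) (metis add.commute diff_add_cancel)
  qed
  moreover have "symmetric_mat Y" unfolding Y_def by (rule symmetric_stretch_update[OF symX])
  ultimately show ?thesis by (simp add: subjet2_def Y_def)
qed

lemma stretched_operator_comparison:
  fixes T \<mu> a r s :: real
  assumes "r > 0" "s > 0" and \<alpha>: "\<alpha> = sqrt r / sqrt s"
    and le: "T + 2 * (\<alpha> - 1) * \<mu> + (\<alpha> - 1)\<^sup>2 * (\<mu> - a) + (s - 1) * (\<alpha>\<^sup>2 * \<mu> - (\<alpha> - 1)\<^sup>2 * a) \<le> 0"
  shows "- a * (sqrt r - sqrt s)\<^sup>2 \<le> - (T + (r - 1) * \<mu>)"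
proof -
  have "s * \<alpha>\<^sup>2 = r" using assms by (simp add: \<alpha> power_divide)
  moreover have "s * (\<alpha> - 1)\<^sup>2 = (sqrt r - sqrt s)\<^sup>2"
  proof -
    have "s * (\<alpha> - 1)\<^sup>2 = (sqrt s * (\<alpha> - 1))\<^sup>2" using assms by (simp add: power_mult_distrib)
    also have "sqrt s * (\<alpha> - 1) = sqrt r - sqrt s" using assms by (simp add: \<alpha> algebra_simps)
    finally show ?thesis .
  qed
  moreover have "T + 2 * (\<alpha> - 1) * \<mu> + (\<alpha> - 1)\<^sup>2 * (\<mu> - a) + (s - 1) * (\<alpha>\<^sup>2 * \<mu> - (\<alpha> - 1)\<^sup>2 * a)
      = T - \<mu> + (s * \<alpha>\<^sup>2) * \<mu> - (s * (\<alpha> - 1)\<^sup>2) * a"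
    by (simp add: power2_eq_square algebra_simps)
  ultimately show ?thesis using le by (simp add: algebra_simps)
qed

lemma Fop_lower_bound_by_sqrt_gap:
  assumes "open \<Omega>" "x \<in> \<Omega>" "y \<in> \<Omega>" "q \<ge> 2" "\<epsilon> > 0" "x \<noteq> y"
    and le: "\<And>z w. w \<in> \<Omega> \<Longrightarrow> v z \<le> u w + norm (z - w) powr q / (q * \<epsilon> powr (q - 1))"
    and eq: "v x = u y + norm (x - y) powr q / (q * \<epsilon> powr (q - 1))"
    and sub: "(\<eta>, X) \<in> subjet2 \<Omega> v x"
    and \<eta>: "\<eta> = (norm (x - y) / \<epsilon>) powr (q - 1) *\<^sub>R sgn (x - y)"
    and super: "visc_supersol \<Omega> p u" and p: "p x > 1" "p y > 1"
  shows "- ((q - 1) * (2 * norm (x - y)) powr (q - 2) / \<epsilon> powr (q - 1)) * (sqrt (p x - 1) - sqrt (p y - 1))\<^sup>2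
    \<le> Fop p x \<eta> X"
proof -
  define e where "e = sgn (x - y)"
  define a where "a = (q - 1) * (2 * norm (x - y)) powr (q - 2) / \<epsilon> powr (q - 1)"
  define \<mu> where "\<mu> = (X *v e) \<bullet> e"
  define s where "s = p y - 1"
  define \<alpha> where "\<alpha> = sqrt (p x - 1) / sqrt s"
  define Y where "Y = stretch_update X e (\<alpha> - 1) ((\<alpha> - 1)\<^sup>2 * (\<mu> - a))"
  have e: "norm e = 1" "e \<bullet> e = 1" using \<open>x \<noteq> y\<close> by (simp_all add: e_def norm_sgn dot_square_norm)
  have n: "(norm (x - y) / \<epsilon>) powr (q - 1) \<noteq> 0" using \<open>x \<noteq> y\<close> \<open>\<epsilon> > 0\<close> by simp
  have "(\<eta>, Y) \<in> subjet2 \<Omega> u y"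
    unfolding Y_def \<mu>_def a_def e_def by (rule subjet2_infconv_stretch[OF assms(1,2,4-6) le eq sub \<eta>])
  moreover have "\<eta> \<noteq> 0" using n e(1) by (auto simp: \<eta> e_def[symmetric])
  ultimately have "0 \<le> Fop p y \<eta> Y" using super \<open>y \<in> \<Omega>\<close> by (simp add: visc_supersol_def)
  also have "Fop p y \<eta> Y = - (trace Y + (s - 1) * ((Y *v e) \<bullet> e))"
    using Fop_scaleR[OF n, of p y e Y] Fop_unit[OF e(1)] by (simp add: \<eta> e_def s_def)
  finally have "trace X + 2 * (\<alpha> - 1) * \<mu> + (\<alpha> - 1)\<^sup>2 * (\<mu> - a) + (s - 1) * (\<alpha>\<^sup>2 * \<mu> - (\<alpha> - 1)\<^sup>2 * a) \<le> 0"
    unfolding Y_def trace_stretch_update stretch_update_quadratic_form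
    by (simp add: e \<mu>_def inner_commute power2_eq_square algebra_simps)
  from stretched_operator_comparison[OF _ _ \<alpha>_def this] show ?thesis
    using Fop_scaleR[OF n, of p x e X] Fop_unit[OF e(1)] p
    by (simp add: \<eta> e_def s_def \<mu>_def a_def)
qed

lemma Fop_lower_bound_at_infconv:
  assumes "open \<Omega>" "x \<in> \<Omega>" "y \<in> \<Omega>" "q \<ge> 2" "\<epsilon> > 0" "x \<noteq> y"
    and le: "\<And>z w. w \<in> \<Omega> \<Longrightarrow> v z \<le> u w + norm (z - w) powr q / (q * \<epsilon> powr (q - 1))"
    and eq: "v x = u y + norm (x - y) powr q / (q * \<epsilon> powr (q - 1))"
    and sub: "(\<eta>, X) \<in> subjet2 \<Omega> v x"
    and \<eta>: "\<eta> = (norm (x - y) / \<epsilon>) powr (q - 1) *\<^sub>R sgn (x - y)"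
    and super: "visc_supersol \<Omega> p u" and lip: "lipschitz_on L \<Omega> p"
    and pmin: "pmin > 1" "\<forall>z\<in>\<Omega>. pmin \<le> p z"
  shows "- ((q - 1) * 2 powr (q - 2) * L\<^sup>2 / (pmin - 1)) * (norm (x - y) * (norm (x - y) / \<epsilon>) powr (q - 1))
    \<le> Fop p x \<eta> X"
proof -
  define \<rho> where "\<rho> = norm (x - y)"
  define a where "a = (q - 1) * (2 * \<rho>) powr (q - 2) / \<epsilon> powr (q - 1)"
  define r where "r = p x - 1"
  define s where "s = p y - 1"
  have "\<rho> > 0" using \<open>x \<noteq> y\<close> by (simp add: \<rho>_def)
  have rs: "r \<ge> pmin - 1" "s \<ge> pmin - 1" "r > 0" "s > 0" using assms(2,3) pmin by (auto simp: r_def s_def)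
  have "- a * (sqrt r - sqrt s)\<^sup>2 \<le> Fop p x \<eta> X"
    unfolding a_def \<rho>_def r_def s_def
    by (rule Fop_lower_bound_by_sqrt_gap[OF assms(1-6) le eq sub \<eta> super]) (use rs in \<open>simp_all add: r_def s_def\<close>)
  moreover have "a * (sqrt r - sqrt s)\<^sup>2 \<le> a * ((L * \<rho>)\<^sup>2 / (pmin - 1))"
  proof (intro mult_left_mono)
    have "\<bar>r - s\<bar> \<le> L * \<rho>"
      using lip assms(2,3) by (auto simp: lipschitz_on_def r_def s_def \<rho>_def dist_norm dist_real_def)
    then have "(r - s)\<^sup>2 \<le> (L * \<rho>)\<^sup>2" by (metis abs_ge_zero order_trans power2_abs power_mono)
    then show "(sqrt r - sqrt s)\<^sup>2 \<le> (L * \<rho>)\<^sup>2 / (pmin - 1)"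
      using sqrt_diff_square_le[OF rs(3) rs(2)] pmin by (smt (verit) divide_right_mono)
  qed (use assms(4) in \<open>simp add: a_def\<close>)
  moreover have "a * ((L * \<rho>)\<^sup>2 / (pmin - 1)) = (q - 1) * 2 powr (q - 2) * L\<^sup>2 / (pmin - 1) * (\<rho> * (\<rho> / \<epsilon>) powr (q - 1))"
  proof -
    have "(2 * \<rho>) powr (q - 2) * \<rho>\<^sup>2 = 2 powr (q - 2) * (\<rho> * \<rho> powr (q - 1))"
      using \<open>\<rho> > 0\<close> powr_add[of \<rho> "q - 2" 1] by (simp add: powr_mult power2_eq_square)
    then show ?thesis using \<open>\<epsilon> > 0\<close> by (simp add: a_def powr_divide power_mult_distrib field_simps)
  qed
  ultimately show ?thesis unfolding \<rho>_def mult_minus_left by linarith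
qed

text \<open>Compare the minimality of y with the point at distance t from y on the segment towards x.\<close>
lemma infconv_minimizer_slope_le_modulus:
  assumes "q \<ge> 2" "\<epsilon> > 0" "closed_segment x y \<subseteq> \<Omega>"
    and min: "\<And>z. z \<in> \<Omega> \<Longrightarrow> u y + norm (x - y) powr q / (q * \<epsilon> powr (q - 1))
      \<le> u z + norm (x - z) powr q / (q * \<epsilon> powr (q - 1))"
    and \<omega>: "\<forall>a\<in>\<Omega>. \<forall>b\<in>\<Omega>. \<bar>u a - u b\<bar> \<le> \<omega> (norm (a - b))"
    and t: "0 < t" "t \<le> norm (x - y)"
  shows "(norm (x - y) / \<epsilon>) powr (q - 1) * t \<le> q * \<omega> t"
proof -
  define \<rho> where "\<rho> = norm (x - y)"
  define c where "c = q * \<epsilon> powr (q - 1)"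
  define z where "z = y + (t / \<rho>) *\<^sub>R (x - y)"
  have "\<rho> > 0" "c > 0" using assms by (auto simp: \<rho>_def c_def)
  have "z = (1 - (1 - t / \<rho>)) *\<^sub>R x + (1 - t / \<rho>) *\<^sub>R y" by (simp add: z_def algebra_simps)
  moreover have "0 \<le> 1 - t / \<rho>" "1 - t / \<rho> \<le> 1" using t \<open>\<rho> > 0\<close> by (simp_all add: \<rho>_def)
  ultimately have "z \<in> closed_segment x y" unfolding in_segment(1) by blast
  then have "z \<in> \<Omega>" using assms(3) by blast
  have "norm (x - z) = \<rho> - t"
  proof -
    have "x - z = (1 - t / \<rho>) *\<^sub>R (x - y)" by (simp add: z_def algebra_simps)
    moreover have "\<bar>1 - t / \<rho>\<bar> = 1 - t / \<rho>" using t \<open>\<rho> > 0\<close> by (simp add: \<rho>_def)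
    ultimately have "norm (x - z) = (1 - t / \<rho>) * \<rho>" by (simp add: \<rho>_def)
    then show ?thesis using \<open>\<rho> > 0\<close> by (simp add: left_diff_distrib)
  qed
  moreover have "norm (z - y) = t" using t \<open>\<rho> > 0\<close> by (simp add: z_def \<rho>_def)
  ultimately have "\<rho> powr q / c - (\<rho> - t) powr q / c \<le> \<omega> t"
    using min[OF \<open>z \<in> \<Omega>\<close>] \<omega> \<open>z \<in> \<Omega>\<close> assms(3) by (force simp: \<rho>_def c_def)
  moreover have "t * \<rho> powr (q - 1) \<le> \<rho> powr q - (\<rho> - t) powr q"
  proof -
    have "(\<rho> - t) * (\<rho> - t) powr (q - 1) \<le> (\<rho> - t) * \<rho> powr (q - 1)"
      using t assms(1) by (intro mult_left_mono powr_mono2) (auto simp: \<rho>_def)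
    moreover have "(\<rho> - t) * (\<rho> - t) powr (q - 1) = (\<rho> - t) powr q"
      using powr_add[of "\<rho> - t" 1 "q - 1"] t by (cases "\<rho> = t") (auto simp: \<rho>_def)
    ultimately show ?thesis using powr_add[of \<rho> 1 "q - 1"] \<open>\<rho> > 0\<close> by (simp add: algebra_simps)
  qed
  then have "t * \<rho> powr (q - 1) / c \<le> \<rho> powr q / c - (\<rho> - t) powr q / c"
    using \<open>c > 0\<close> by (simp add: divide_right_mono flip: diff_divide_distrib)
  ultimately have "t * \<rho> powr (q - 1) / c \<le> \<omega> t" by linarith
  then show ?thesis
    using \<open>c > 0\<close> assms(2) by (simp add: \<rho>_def[symmetric] c_def powr_divide field_simps)
qed

lemma infconv_Fop_estimate:
  assumes "open \<Omega>" "bounded \<Omega>" "lipschitz_on L \<Omega> p" "pmin > 1" "\<forall>z\<in>\<Omega>. pmin \<le> p z" "q \<ge> 2"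
    and "\<delta> > 0" and bound: "\<And>t. 0 < t \<Longrightarrow> t \<le> \<delta> \<Longrightarrow> \<bar>\<omega> t\<bar> \<le> 1"
    and "uniformly_continuous_on \<Omega> u" and \<omega>: "\<forall>a\<in>\<Omega>. \<forall>b\<in>\<Omega>. \<bar>u a - u b\<bar> \<le> \<omega> (norm (a - b))"
    and "visc_supersol \<Omega> p u" and "\<epsilon> > 0" and x: "x \<in> inner_set \<Omega> (rad \<Omega> u q \<epsilon>)"
    and sub: "(\<eta>, X) \<in> subjet2 \<Omega> (infconv \<Omega> u q \<epsilon>) x" and "\<eta> \<noteq> 0"
  defines "R \<equiv> infconv_radius q \<delta> \<epsilon>"
  shows "- ((q - 1) * 2 powr (q - 2) * L\<^sup>2 / (pmin - 1)) * (R * (1 + q / \<delta>) + q * abs_sup_upto \<delta> \<omega> R)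
    \<le> norm \<eta> powr (min (p x - 2) 0) * Fop p x \<eta> X"
proof -
  define K where "K = (q - 1) * 2 powr (q - 2) * L\<^sup>2 / (pmin - 1)"
  have "K \<ge> 0" using assms(4,6) by (simp add: K_def)
  have "x \<in> \<Omega>" using x by (simp add: inner_set_def)
  have bdd: "bounded (u ` \<Omega>)" using bounded_uniformly_continuous_image assms(2,9) by blast
  obtain y where seg: "closed_segment x y \<subseteq> \<Omega>"
    and eq: "infconv \<Omega> u q \<epsilon> x = u y + norm (x - y) powr q / (q * \<epsilon> powr (q - 1))"
    using infconv_attained[OF uniformly_continuous_imp_continuous[OF assms(9)] bdd _ \<open>\<epsilon> > 0\<close> x] assms(6)
    by auto
  have "y \<in> \<Omega>" using seg by auto
  have le: "infconv \<Omega> u q \<epsilon> z \<le> u w + norm (z - w) powr q / (q * \<epsilon> powr (q - 1))" if "w \<in> \<Omega>" for z w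
    using infconv_le[OF bounded_imp_bdd_below[OF bdd] _ that] assms(6) by simp
  define \<rho> where "\<rho> = norm (x - y)"
  define n where "n = (\<rho> / \<epsilon>) powr (q - 1)"
  have "x \<noteq> y" and \<eta>: "\<eta> = n *\<^sub>R sgn (x - y)"
    using subjet2_touching_power_gradient[OF assms(1) \<open>x \<in> \<Omega>\<close> assms(6,12) le[OF \<open>y \<in> \<Omega>\<close>] eq sub \<open>\<eta> \<noteq> 0\<close>]
    by (auto simp: n_def \<rho>_def)
  have "\<rho> > 0" "n > 0" using \<open>x \<noteq> y\<close> \<open>\<epsilon> > 0\<close> by (auto simp: \<rho>_def n_def)
  have F: "- K * (\<rho> * n) \<le> Fop p x \<eta> X"
    unfolding K_def \<rho>_def n_def
    by (rule Fop_lower_bound_at_infconv[OF assms(1) \<open>x \<in> \<Omega>\<close> \<open>y \<in> \<Omega>\<close> assms(6,12) \<open>x \<noteq> y\<close> le eq sub])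
      (use \<eta> assms(3-5,11) in \<open>simp_all add: n_def \<rho>_def\<close>)
  have "\<rho> \<le> R \<and> \<rho> * n \<le> q * abs_sup_upto \<delta> \<omega> R + q / \<delta> * R"
    unfolding R_def n_def
  proof (rule infconv_radius_bound[OF assms(6,12) \<open>\<rho> > 0\<close> assms(7) bound])
    have "u y + norm (x - y) powr q / (q * \<epsilon> powr (q - 1)) \<le> u z + norm (x - z) powr q / (q * \<epsilon> powr (q - 1))"
      if "z \<in> \<Omega>" for z
      using le[OF that, of x] eq by simp
    then show "(\<rho> / \<epsilon>) powr (q - 1) * t \<le> q * \<omega> t" if "0 < t" "t \<le> \<rho>" for t
      using infconv_minimizer_slope_le_modulus[OF assms(6,12) seg _ \<omega>] that by (simp add: \<rho>_def)
  qed
  then have "\<rho> * (1 + n) \<le> R * (1 + q / \<delta>) + q * abs_sup_upto \<delta> \<omega> R"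
    by (simp add: algebra_simps)
  from powr_weighted_lower_bound[OF \<open>K \<ge> 0\<close> \<open>\<rho> > 0\<close> \<open>n > 0\<close> _ _ this F]
  have "- K * (R * (1 + q / \<delta>) + q * abs_sup_upto \<delta> \<omega> R) \<le> n powr (min (p x - 2) 0) * Fop p x \<eta> X"
    using assms(4,5) \<open>x \<in> \<Omega>\<close> by force
  also have "n = norm \<eta>" using \<open>n > 0\<close> \<open>x \<noteq> y\<close> by (simp add: \<eta> norm_sgn)
  finally show ?thesis by (simp add: K_def)
qed

theorem lemma5p3:
  fixes \<Omega> :: "(real^'n) set" and p :: "real^'n \<Rightarrow> real" and q :: real
    and \<omega> :: "real \<Rightarrow> real"
  assumes "open \<Omega>" and "bounded \<Omega>"
    and "\<exists>L. lipschitz_on L \<Omega> p"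
    and "\<forall>x\<in>\<Omega>. p x > 1"
    and "\<exists>pmin>1. \<forall>x\<in>\<Omega>. pmin \<le> p x"
    and "q \<ge> 2"
    and "(\<omega> \<longlongrightarrow> 0) (at_right 0)"
  shows "\<exists>E :: real \<Rightarrow> real. (E \<longlongrightarrow> 0) (at_right 0) \<and>
    (\<forall>u. uniformly_continuous_on \<Omega> u
        \<longrightarrow> (\<forall>x\<in>\<Omega>. \<forall>y\<in>\<Omega>. \<bar>u x - u y\<bar> \<le> \<omega> (norm (x - y)))
        \<longrightarrow> visc_supersol \<Omega> p u
        \<longrightarrow> (\<forall>\<epsilon>>0. \<forall>x\<in>inner_set \<Omega> (rad \<Omega> u q \<epsilon>). \<forall>\<eta> X.
              (\<eta>, X) \<in> subjet2 \<Omega> (infconv \<Omega> u q \<epsilon>) x \<longrightarrow> \<eta> \<noteq> 0 \<longrightarrow>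
              norm \<eta> powr (min (p x - 2) 0) * Fop p x \<eta> X \<ge> E \<epsilon>))"
proof -
  obtain L where lip: "lipschitz_on L \<Omega> p" using assms(3) by blast
  obtain pmin where pmin: "pmin > 1" "\<forall>x\<in>\<Omega>. pmin \<le> p x" using assms(5) by blast
  have "\<forall>\<^sub>F t in at_right 0. dist (\<omega> t) 0 < 1" by (rule tendstoD[OF assms(7)]) simp
  then obtain d where "d > 0" and d: "\<And>t. 0 < t \<Longrightarrow> t < d \<Longrightarrow> \<bar>\<omega> t\<bar> < 1"
    unfolding eventually_at_right_field by auto
  define \<delta> where "\<delta> = d / 2"
  have "\<delta> > 0" and bound: "\<And>t. 0 < t \<Longrightarrow> t \<le> \<delta> \<Longrightarrow> \<bar>\<omega> t\<bar> \<le> 1"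
    using \<open>d > 0\<close> d by (auto simp: \<delta>_def less_imp_le)
  show ?thesis
    using infconv_error_tendsto_0[OF assms(7,6) \<open>\<delta> > 0\<close> bound, of "(q - 1) * 2 powr (q - 2) * L\<^sup>2 / (pmin - 1)"]
      infconv_Fop_estimate[where \<omega> = \<omega>, OF assms(1,2) lip pmin assms(6) \<open>\<delta> > 0\<close> bound]
    by (intro exI[of _ "\<lambda>\<epsilon>. - ((q - 1) * 2 powr (q - 2) * L\<^sup>2 / (pmin - 1))
      * (infconv_radius q \<delta> \<epsilon> * (1 + q / \<delta>) + q * abs_sup_upto \<delta> \<omega> (infconv_radius q \<delta> \<epsilon>))"]) blast
qed

end
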